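(* Let $d\ge 3$ and $0\le j\le \left\lfloor \frac{3(d-1)}{2}\right\rfloor$. Then the multiplicity of the standard representation in $\operatorname{Ker}(E)\cap A(d)_j$ is $$\operatorname{st}(d,j)=\tfrac12\big(\operatorname{mult}(d,j)-\operatorname{triv}(d,j)-\operatorname{sign}(d,j)\big),$$ where $\operatorname{mult}(d,j)=j+1$ if $0\le j\le d-1$, $\operatorname{mult}(d,j)=3d-2-2j$ if $d\le j\le \lfloor 3(d-1)/2\rfloor$, $\operatorname{triv}(d,j)=p_{3,d-1}(j)-p_{3,d-1}(j-1)$ and $\operatorname{sign}(d,j)=p^+_{3,d-1}(j)-p^+_{3,d-1}(j-1)$.
   Context: $\Bbbk$ is an algebraically closed field of characteristic $0$. For an integer $d\ge 1$, $A(d)=\Bbbk[x_1,x_2,x_3]/(x_1^d,x_2^d,x_3^d)=\bigoplus_j A(d)_j$ with its standard grading. $S_3$ acts on $A(d)$ by permuting the variables. The linear map $E:A(d)_{j+1}\to A(d)_j$ is defined on the monomial basis by $E(x_1^{a_1}x_2^{a_2}x_3^{a_3})=\sum_{k=1}^{3} a_k(d-a_k)\,x_1^{a_1}\cdots x_k^{a_k-1}\cdots x_3^{a_3}$; it commutes with the $S_3$-action. The standard representation of $S_3$ is the $2$-dimensional irreducible representation (Specht module for the partition $(2,1)$); $\operatorname{st}(d,j)$ denotes its multiplicity in $\operatorname{Ker}(E)\cap A(d)_j$. For integers $l\ge0$, $n$: $p_{3,l}(n)$ is the number of integer triples $(a,b,c)$ with $l\ge a\ge b\ge c\ge 0$,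 $a+b+c=n$, and $p^+_{3,l}(n)$ is the number with $l\ge a>b>c\ge 0$, $a+b+c=n$ (both $0$ for $n<0$). *)

theory Defs
  imports Main "HOL-Combinatorics.Permutations" "HOL-Computational_Algebra.Polynomial" "HOL-Library.Function_Algebras"
begin

text \<open>Algebraically closed field (characteristic 0 is imposed via the class field_char_0).\<close>
definition alg_closed :: "'k::field itself \<Rightarrow> bool" where
  "alg_closed _ \<longleftrightarrow> (\<forall>p::'k poly. degree p > 0 \<longrightarrow> (\<exists>x. poly p x = 0))"

text \<open>Exponent vectors of monomials x1^a1 x2^a2 x3^a3 are functions e :: nat => nat with
  e i = 0 for i >= 3 (variables indexed 0,1,2).  An element of A(d) is given by its
  coefficient function on such exponent vectors; A(d)_j is the graded piece.\<close>
definition is_mono :: "nat \<Rightarrow> (nat \<Rightarrow> nat) \<Rightarrow> bool" where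
  "is_mono d e \<longleftrightarrow> (\<forall>i\<ge>3. e i = 0) \<and> (\<forall>i<3. e i < d)"

definition Agr :: "nat \<Rightarrow> nat \<Rightarrow> ((nat \<Rightarrow> nat) \<Rightarrow> 'k::field) set" where
  "Agr d j = {f. \<forall>e. f e \<noteq> 0 \<longrightarrow> is_mono d e \<and> e 0 + e 1 + e 2 = j}"

text \<open>S3 acting by permuting variables: sigma sends x_i to x_(sigma i), so the
  monomial with exponent e goes to the one with exponent e o inv sigma.\<close>
definition actA :: "(nat \<Rightarrow> nat) \<Rightarrow> ((nat \<Rightarrow> nat) \<Rightarrow> 'k::field) \<Rightarrow> ((nat \<Rightarrow> nat) \<Rightarrow> 'k)" where
  "actA \<sigma> f = (\<lambda>e. f (e \<circ> \<sigma>))"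

text \<open>E(x^a) = sum_k a_k (d - a_k) x^(a - e_k), written on coefficients.\<close>
definition Emap :: "nat \<Rightarrow> ((nat \<Rightarrow> nat) \<Rightarrow> 'k::field) \<Rightarrow> ((nat \<Rightarrow> nat) \<Rightarrow> 'k)" where
  "Emap d f = (\<lambda>b. \<Sum>k<3. of_nat ((b k + 1) * (d - (b k + 1))) * f (b(k := b k + 1)))"

definition KerE :: "nat \<Rightarrow> nat \<Rightarrow> ((nat \<Rightarrow> nat) \<Rightarrow> 'k::field) set" where
  "KerE d j = {f \<in> Agr d j. Emap d f = (\<lambda>_. 0)}"

text \<open>The standard representation: the Specht module S^(2,1), realised as
  {v in k^3 | v0+v1+v2 = 0} with S3 permuting coordinates.\<close>
definition StdRep :: "(nat \<Rightarrow> 'k::field) set" where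
  "StdRep = {v. (\<forall>i\<ge>3. v i = 0) \<and> v 0 + v 1 + v 2 = 0}"

definition actV :: "(nat \<Rightarrow> nat) \<Rightarrow> (nat \<Rightarrow> 'k::field) \<Rightarrow> (nat \<Rightarrow> 'k)" where
  "actV \<sigma> v = (\<lambda>i. v (inv \<sigma> i))"

text \<open>Hom_{S3}(StdRep, W): S3-equivariant linear maps StdRep -> W (extended by 0
  outside StdRep, so that they form a k-vector space).\<close>
definition HomS3 :: "((nat \<Rightarrow> nat) \<Rightarrow> 'k::field) set \<Rightarrow> ((nat \<Rightarrow> 'k) \<Rightarrow> ((nat \<Rightarrow> nat) \<Rightarrow> 'k)) set" where
  "HomS3 W = {\<phi>.
     (\<forall>v\<in>StdRep. \<phi> v \<in> W) \<and>
     (\<forall>v. v \<notin> StdRep \<longrightarrow> \<phi> v = (\<lambda>_. 0)) \<and>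
     (\<forall>v\<in>StdRep. \<forall>w\<in>StdRep. \<phi> (\<lambda>i. v i + w i) = (\<lambda>e. \<phi> v e + \<phi> w e)) \<and>
     (\<forall>c. \<forall>v\<in>StdRep. \<phi> (\<lambda>i. c * v i) = (\<lambda>e. c * \<phi> v e)) \<and>
     (\<forall>\<sigma>. \<sigma> permutes {..<3} \<longrightarrow> (\<forall>v\<in>StdRep. \<phi> (actV \<sigma> v) = actA \<sigma> (\<phi> v)))}"

text \<open>Multiplicity of the irreducible standard representation in W = dim_k Hom_{S3}(StdRep, W).\<close>
definition st :: "'k::field itself \<Rightarrow> nat \<Rightarrow> nat \<Rightarrow> nat" where
  "st _ d j = vector_space.dim (\<lambda>(c::'k) \<phi>. \<lambda>v e. c * \<phi> v e) (HomS3 (KerE d j :: ((nat \<Rightarrow> nat) \<Rightarrow> 'k) set))"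

definition p3 :: "nat \<Rightarrow> int \<Rightarrow> nat" where
  "p3 l n = card {(a,b,c). a \<le> (l::nat) \<and> (b::nat) \<le> a \<and> (c::nat) \<le> b \<and> int (a+b+c) = n}"

definition p3plus :: "nat \<Rightarrow> int \<Rightarrow> nat" where
  "p3plus l n = card {(a,b,c). a \<le> (l::nat) \<and> (b::nat) < a \<and> (c::nat) < b \<and> int (a+b+c) = n}"

definition mult :: "nat \<Rightarrow> nat \<Rightarrow> int" where
  "mult d j = (if j \<le> d - 1 then int j + 1 else 3 * int d - 2 - 2 * int j)"

definition triv :: "nat \<Rightarrow> nat \<Rightarrow> int" where
  "triv d j = int (p3 (d-1) (int j)) - int (p3 (d-1) (int j - 1))"

definition sgn_mult :: "nat \<Rightarrow> nat \<Rightarrow> int" where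
  "sgn_mult d j = int (p3plus (d-1) (int j)) - int (p3plus (d-1) (int j - 1))"

end

theory Submission
  imports Defs
begin

text \<open>
  Write \<open>Std\<close> for the standard representation and \<open>Y\<^sub>j\<close> for the space of \<open>w \<in> A(d)\<^sub>j\<close> with
  \<open>(0 1)\<cdot>w = -w\<close> and \<open>w + \<rho>w + \<rho>\<^sup>2w = 0\<close> for the 3-cycle \<open>\<rho>\<close>. Evaluation at \<open>e\<^sub>0 - e\<^sub>1\<close> identifies
  \<open>Hom\<^sub>S\<^sub>3(Std, W)\<close> with the corresponding subspace of \<open>W\<close>, so \<open>st(d, j) = dim (Y\<^sub>j \<inter> Ker E)\<close>.
  The space \<open>Y\<^sub>j\<close> has a basis indexed by representatives of the \<open>S\<^sub>3\<close>-orbits of exponent vectors: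
  two for each orbit with distinct entries, one for each orbit with exactly two equal entries.
  Multiplication \<open>L\<close> by \<open>x\<^sub>1 + x\<^sub>2 + x\<^sub>3\<close> satisfies \<open>[E, L] = 3(d - 1) - 2j\<close> on \<open>A(d)\<^sub>j\<close>, so below the
  middle degree \<open>E L\<close> is injective on \<open>Y\<^sub>j\<^sub>-\<^sub>1\<close>, hence \<open>E : Y\<^sub>j \<rightarrow> Y\<^sub>j\<^sub>-\<^sub>1\<close> is onto and rank-nullity
  gives \<open>st(d, j) = #reps\<^sub>j - #reps\<^sub>j\<^sub>-\<^sub>1\<close>. Averaging over \<open>S\<^sub>3\<close> shows that the number of all exponent
  vectors of degree \<open>j\<close> is \<open>2 #reps\<^sub>j + p\<^sub>3\<^sub>,\<^sub>d\<^sub>-\<^sub>1(j) + p\<^sup>+\<^sub>3\<^sub>,\<^sub>d\<^sub>-\<^sub>1(j)\<close>, and \<open>mult(d, j)\<close> is the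
  difference of these numbers in degrees \<open>j\<close> and \<open>j - 1\<close>.
\<close>

section \<open>Rank-nullity inside infinite-dimensional spaces\<close>

context vector_space begin

lemma in_span_disjoint_subsets_eq_0:
  assumes "independent C" "B \<subseteq> C" "D \<subseteq> C" "B \<inter> D = {}" "finite D"
    and "x \<in> span B" "x \<in> span D"
  shows "x = 0"
  using assms(5,3,4,6,7)
proof (induction D arbitrary: x rule: finite_induct)
  case empty
  then show ?case by simp
next
  case (insert a D x)
  obtain k where k: "x - scale k a \<in> span D"
    using span_breakdown[of a "insert a D" x] insert.hyps(2) insert.prems(4) by auto
  show ?case
  proof (cases "k = 0")
    case True
    then show ?thesis using insert k by auto
  next
    case False
    have "scale k a = x - (x - scale k a)" by simp
    also have "\<dots> \<in> span (B \<union> D)"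
      using insert.prems(3) k span_mono[of B "B \<union> D"] span_mono[of D "B \<union> D"]
      by (meson subsetD sup_ge1 sup_ge2 span_diff)
    finally have "a \<in> span (B \<union> D)"
      using span_scale[of "scale k a" "B \<union> D" "inverse k"] False by simp
    moreover have "B \<union> D \<subseteq> C - {a}" using insert assms(2) by auto
    ultimately have "a \<in> span (C - {a})" using span_mono by blast
    then show ?thesis using assms(1) insert.prems(1) dependent_def by auto
  qed
qed

lemma inj_on_endomorphism_imp_onto:
  assumes lf: "Vector_Spaces.linear scale scale f" and S: "subspace S" and A: "finite A" "S \<subseteq> span A"
    and inj: "inj_on f S" and sub: "f ` S \<subseteq> S"
  shows "f ` S = S"
proof -
  interpret lf: Vector_Spaces.linear scale scale f by fact
  obtain B where B: "B \<subseteq> S" "independent B" "S \<subseteq> span B" "card B = dim S"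
    using basis_exists[of S] by auto
  have fB: "finite B" using independent_span_bound[OF A(1) B(2)] B(1) A(2) by auto
  have spB: "span B = S" using span_subspace[OF B(1) B(3) S] .
  have ind: "independent (f ` B)"
    using lf.independent_injective_image[OF B(2)] inj spB by auto
  have cfB: "card (f ` B) = card B"
    using card_image inj_on_subset[OF inj B(1)] by auto
  have "S \<subseteq> span (f ` B)"
  proof (rule ccontr)
    assume "\<not> S \<subseteq> span (f ` B)"
    then obtain x where x: "x \<in> S" "x \<notin> span (f ` B)" by auto
    have i2: "independent (insert x (f ` B))" using independent_insertI[OF x(2) ind] .
    have "insert x (f ` B) \<subseteq> span B" using x sub B spB by auto
    then have "card (insert x (f ` B)) \<le> card B" using independent_span_bound[OF fB i2] by auto
    moreover have "x \<notin> f ` B" using x(2) span_superset[of "f ` B"] by blast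
    ultimately show False using cfB fB by simp
  qed
  then have "S \<subseteq> f ` span B" using lf.span_image by auto
  then show ?thesis using spB sub by auto
qed

end

context vector_space_pair begin

lemma dim_image_eq_of_inj_on_span:
  assumes lf: "Vector_Spaces.linear s1 s2 f" and inj: "inj_on f (vs1.span S)"
  shows "vs2.dim (f ` S) = vs1.dim S"
proof -
  interpret lf: Vector_Spaces.linear s1 s2 f by fact
  obtain B where B: "B \<subseteq> S" "vs1.independent B" "S \<subseteq> vs1.span B" "card B = vs1.dim S"
    using vs1.basis_exists[of S] by auto
  then have "vs1.span S = vs1.span B"
    using vs1.span_mono[of B S] vs1.span_mono[of S "vs1.span B"] vs1.span_span[of B] by auto
  moreover have "card (f ` B) = card B"
    using card_image[of f B] inj_on_subset[of f "vs1.span S" B] inj B(1) vs1.span_superset by auto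
  ultimately show ?thesis
    by (metis B(2,4) inj lf.dependent_inj_imageD lf.span_image vs2.dim_eq_card_independent vs2.dim_span)
qed

lemma rank_nullity_onto:
  assumes lf: "Vector_Spaces.linear s1 s2 f" and S: "vs1.subspace S"
    and fin: "finite A" "S \<subseteq> vs1.span A" and onto: "f ` S = T"
  shows "vs1.dim S = vs1.dim {x\<in>S. f x = 0} + vs2.dim T"
proof -
  interpret lf: Vector_Spaces.linear s1 s2 f by fact
  define K where "K = {x\<in>S. f x = 0}"
  obtain B where B: "B \<subseteq> K" "vs1.independent B" "K \<subseteq> vs1.span B" "card B = vs1.dim K"
    using vs1.basis_exists[of K] by auto
  obtain C where C: "B \<subseteq> C" "C \<subseteq> S" "vs1.independent C" "S \<subseteq> vs1.span C"
    using vs1.maximal_independent_subset_extend[of B S] B(1,2) K_def by auto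
  have fC: "finite C" using vs1.independent_span_bound[OF fin(1) C(3)] C(2) fin(2) by auto
  define D where "D = C - B"
  have fD: "finite D" using fC D_def by auto
  have spanD: "vs1.span D \<subseteq> S" using C(2) D_def vs1.span_minimal[OF _ S, of D] by auto
  have injD: "inj_on f (vs1.span D)"
  proof (rule inj_onI)
    fix x y assume x: "x \<in> vs1.span D" and y: "y \<in> vs1.span D" and e: "f x = f y"
    have xy: "x - y \<in> vs1.span D" using x y vs1.span_diff by blast
    then have "x - y \<in> vs1.span B" using spanD e lf.diff K_def B(3) by auto
    moreover have "D \<subseteq> C" "B \<inter> D = {}" using D_def by auto
    ultimately have "x - y = 0"
      using vs1.in_span_disjoint_subsets_eq_0[OF C(3,1) _ _ fD _ xy] by simp
    then show "x = y" by simp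
  qed
  have "vs2.dim (f ` D) = card D"
    using dim_image_eq_of_inj_on_span[OF lf injD] vs1.dim_eq_card_independent
      vs1.independent_mono[OF C(3)] D_def by auto
  moreover have "vs2.span (f ` D) = T"
  proof (rule vs2.span_subspace)
    show "f ` D \<subseteq> T" using onto C(2) D_def by auto
    show "vs2.subspace T" using onto lf.subspace_image[OF S] by simp
    show "T \<subseteq> vs2.span (f ` D)"
    proof
      fix y assume "y \<in> T"
      then obtain x where x: "x \<in> S" "y = f x" using onto by auto
      then have "f x \<in> vs2.span (f ` C)" using C(4) lf.span_image by auto
      moreover have "f ` C \<subseteq> insert 0 (f ` D)" using B K_def D_def by auto
      ultimately have "f x \<in> vs2.span (insert 0 (f ` D))" using vs2.span_mono by blast
      then show "y \<in> vs2.span (f ` D)" using x by simp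
    qed
  qed
  ultimately have "vs2.dim T = card D" using vs2.dim_span by metis
  moreover have "vs1.dim S = card C" using vs1.basis_card_eq_dim[OF C(2,4,3)] by simp
  moreover have "card C = card B + card D"
    using fC C(1) D_def by (metis card_Diff_subset finite_subset add_diff_inverse_nat card_mono not_less)
  ultimately show ?thesis using B(4) K_def by simp
qed

end

section \<open>The operators E and L on A(d)\<close>

definition expv :: "nat \<Rightarrow> nat \<Rightarrow> nat \<Rightarrow> nat \<Rightarrow> nat" where
  "expv a b c = (\<lambda>i. if i = 0 then a else if i = 1 then b else if i = 2 then c else 0)"

lemma expv_apply [simp]: "expv a b c 0 = a" "expv a b c (Suc 0) = b" "expv a b c 2 = c"
  by (auto simp: expv_def)

lemma expv_upd [simp]:
  "(expv a b c)(0 := v) = expv v b c" "(expv a b c)(Suc 0 := v) = expv a v c"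
  "(expv a b c)(2 := v) = expv a b v"
  by (auto simp: expv_def fun_eq_iff)

lemma is_mono_expv [simp]: "is_mono d (expv a b c) \<longleftrightarrow> a < d \<and> b < d \<and> c < d"
  by (auto simp: is_mono_def expv_def less_Suc_eq numeral_3_eq_3)

lemma is_mono_eq_expv: "is_mono d e \<Longrightarrow> e = expv (e 0) (e 1) (e 2)"
  by (auto simp: is_mono_def expv_def fun_eq_iff)

lemma is_mono_obtain_expv:
  assumes "is_mono d e"
  obtains a b c where "e = expv a b c" "a < d" "b < d" "c < d"
  using assms is_mono_eq_expv is_mono_expv by metis

lemma sum_lessThan_3: "(\<Sum>k<3. g k) = g 0 + g (Suc 0) + g 2"
  by (simp add: numeral_3_eq_3 lessThan_Suc numeral_2_eq_2 add.commute add.left_commute)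

lemma Agr_nonzero_D: "f \<in> Agr d j \<Longrightarrow> f e \<noteq> 0 \<Longrightarrow> is_mono d e \<and> e 0 + e 1 + e 2 = j"
  by (auto simp: Agr_def)

lemma Agr_expv_eq_0: "f \<in> Agr d j \<Longrightarrow> a + b + c \<noteq> j \<Longrightarrow> f (expv a b c) = 0"
  using Agr_nonzero_D[of f d j "expv a b c"] by auto

definition Ecoeff :: "nat \<Rightarrow> nat \<Rightarrow> 'k::field" where
  "Ecoeff d t = of_nat ((t + 1) * (d - (t + 1)))"

lemma Emap_eq: "Emap d f b = (\<Sum>k<3. Ecoeff d (b k) * f (b(k := b k + 1)))"
  by (simp add: Emap_def Ecoeff_def)

lemma Emap_expv:
  "Emap d f (expv a b c) = Ecoeff d a * f (expv (a+1) b c) + Ecoeff d b * f (expv a (b+1) c)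
     + Ecoeff d c * f (expv a b (c+1))"
  by (simp add: Emap_eq sum_lessThan_3)

lemma Ecoeff_eq_0: "d \<le> t + 1 \<Longrightarrow> Ecoeff d t = 0"
  by (simp add: Ecoeff_def)

lemma Ecoeff_step:
  assumes "t < d"
  shows "(Ecoeff d t :: 'k::field) = (if 0 < t then Ecoeff d (t - 1) else 0) + of_int (int d - 1 - 2 * int t)"
proof -
  obtain r where r: "d = t + 1 + r" using assms by (metis add_Suc_right less_iff_Suc_add add.commute Suc_eq_plus1)
  show ?thesis
  proof (cases t)
    case 0
    then show ?thesis using r by (simp add: Ecoeff_def)
  next
    case (Suc s)
    have "int ((t + 1) * (d - (t + 1))) = int ((s + 1) * (d - (s + 1))) + (int d - 1 - 2 * int t)"
      using r Suc by (simp add: algebra_simps)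
    then have "(of_nat ((t + 1) * (d - (t + 1))) :: 'k)
        = of_nat ((s + 1) * (d - (s + 1))) + of_int (int d - 1 - 2 * int t)"
      by (metis of_int_add of_int_of_nat_eq)
    then show ?thesis using Suc by (simp add: Ecoeff_def)
  qed
qed

text \<open>Multiplication by \<open>x\<^sub>1 + x\<^sub>2 + x\<^sub>3\<close> on \<open>A(d)\<close>, written on coefficients.\<close>
definition Lmap :: "nat \<Rightarrow> ((nat \<Rightarrow> nat) \<Rightarrow> 'k::field) \<Rightarrow> ((nat \<Rightarrow> nat) \<Rightarrow> 'k)" where
  "Lmap d f = (\<lambda>b. if is_mono d b then (\<Sum>k<3. if 0 < b k then f (b(k := b k - 1)) else 0) else 0)"

lemma Lmap_expv:
  "Lmap d f (expv a b c) = (if a < d \<and> b < d \<and> c < d then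
     (if 0 < a then f (expv (a-1) b c) else 0) + (if 0 < b then f (expv a (b-1) c) else 0)
     + (if 0 < c then f (expv a b (c-1)) else 0) else 0)"
  by (simp add: Lmap_def sum_lessThan_3)

lemma Emap_Lmap_expv:
  fixes f :: "(nat \<Rightarrow> nat) \<Rightarrow> 'k::field"
  assumes abc: "a < d" "b < d" "c < d"
  shows "Emap d (Lmap d f) (expv a b c) = Lmap d (Emap d f) (expv a b c)
     + of_int (3 * (int d - 1) - 2 * int (a + b + c)) * f (expv a b c)"
proof -
  have ea: "Ecoeff d a * Lmap d f (expv (a+1) b c) = Ecoeff d a * (f (expv a b c)
     + (if 0 < b then f (expv (a+1) (b-1) c) else 0) + (if 0 < c then f (expv (a+1) b (c-1)) else 0))"
    using abc by (cases "a + 1 < d") (simp_all add: Lmap_expv Ecoeff_eq_0)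
  have eb: "Ecoeff d b * Lmap d f (expv a (b+1) c) = Ecoeff d b * ((if 0 < a then f (expv (a-1) (b+1) c) else 0)
     + f (expv a b c) + (if 0 < c then f (expv a (b+1) (c-1)) else 0))"
    using abc by (cases "b + 1 < d") (simp_all add: Lmap_expv Ecoeff_eq_0)
  have ec: "Ecoeff d c * Lmap d f (expv a b (c+1)) = Ecoeff d c * ((if 0 < a then f (expv (a-1) b (c+1)) else 0)
     + (if 0 < b then f (expv a (b-1) (c+1)) else 0) + f (expv a b c))"
    using abc by (cases "c + 1 < d") (simp_all add: Lmap_expv Ecoeff_eq_0)
  have la: "(if 0 < a then Emap d f (expv (a-1) b c) else 0)
     = (if 0 < a then Ecoeff d (a-1) else 0) * f (expv a b c)
       + Ecoeff d b * (if 0 < a then f (expv (a-1) (b+1) c) else 0)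
       + Ecoeff d c * (if 0 < a then f (expv (a-1) b (c+1)) else 0)"
    by (cases "0 < a") (simp_all add: Emap_expv)
  have lb: "(if 0 < b then Emap d f (expv a (b-1) c) else 0)
     = Ecoeff d a * (if 0 < b then f (expv (a+1) (b-1) c) else 0)
       + (if 0 < b then Ecoeff d (b-1) else 0) * f (expv a b c)
       + Ecoeff d c * (if 0 < b then f (expv a (b-1) (c+1)) else 0)"
    by (cases "0 < b") (simp_all add: Emap_expv)
  have lc: "(if 0 < c then Emap d f (expv a b (c-1)) else 0)
     = Ecoeff d a * (if 0 < c then f (expv (a+1) b (c-1)) else 0)
       + Ecoeff d b * (if 0 < c then f (expv a (b+1) (c-1)) else 0)
       + (if 0 < c then Ecoeff d (c-1) else 0) * f (expv a b c)"
    by (cases "0 < c") (simp_all add: Emap_expv)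
  have L: "Lmap d (Emap d f) (expv a b c) = (if 0 < a then Emap d f (expv (a-1) b c) else 0)
     + (if 0 < b then Emap d f (expv a (b-1) c) else 0) + (if 0 < c then Emap d f (expv a b (c-1)) else 0)"
    using abc by (simp add: Lmap_expv)
  have num: "(of_int (3 * (int d - 1) - 2 * int (a + b + c)) :: 'k) =
     of_int (int d - 1 - 2 * int a) + of_int (int d - 1 - 2 * int b) + of_int (int d - 1 - 2 * int c)"
    by simp
  show ?thesis
    unfolding L la lb lc Emap_expv[of d "Lmap d f"] ea eb ec num
    unfolding Ecoeff_step[OF abc(1)] Ecoeff_step[OF abc(2)] Ecoeff_step[OF abc(3)]
    by (simp add: algebra_simps split del: if_split)
qed

lemma Emap_eq_0_outside:
  assumes "\<And>e. g e \<noteq> 0 \<Longrightarrow> is_mono d e" "\<not> is_mono d b"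
  shows "Emap d g b = 0"
proof -
  have "Ecoeff d (b k) * g (b(k := b k + 1)) = 0" if k: "k < 3" for k
  proof (rule ccontr)
    assume "Ecoeff d (b k) * g (b(k := b k + 1)) \<noteq> 0"
    then have "b k + 1 < d" "is_mono d (b(k := b k + 1))"
      using assms(1) Ecoeff_eq_0[of d "b k"] by (auto simp: not_le[symmetric])
    then have "is_mono d b" using k unfolding is_mono_def by (auto split: if_splits)
    then show False using assms(2) by simp
  qed
  then show ?thesis unfolding Emap_eq by (intro sum.neutral) auto
qed

lemma Emap_Lmap_commutator:
  fixes f :: "(nat \<Rightarrow> nat) \<Rightarrow> 'k::field"
  assumes f: "f \<in> Agr d m"
  shows "Emap d (Lmap d f) = (\<lambda>b. Lmap d (Emap d f) b + of_int (3 * (int d - 1) - 2 * int m) * f b)"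
proof
  fix b
  show "Emap d (Lmap d f) b = Lmap d (Emap d f) b + of_int (3 * (int d - 1) - 2 * int m) * f b"
  proof (cases "is_mono d b")
    case False
    have "Emap d (Lmap d f) b = 0"
      by (rule Emap_eq_0_outside[OF _ False]) (auto simp: Lmap_def split: if_splits)
    moreover have "f b = 0" using Agr_nonzero_D[OF f] False by auto
    ultimately show ?thesis using False by (simp add: Lmap_def)
  next
    case True
    then obtain x y z where b: "b = expv x y z" "x < d" "y < d" "z < d"
      by (rule is_mono_obtain_expv)
    have "of_int (3 * (int d - 1) - 2 * int (x + y + z)) * f (expv x y z)
        = (of_int (3 * (int d - 1) - 2 * int m) * f (expv x y z) :: 'k)"
      by (cases "x + y + z = m") (simp_all add: Agr_expv_eq_0[OF f])
    then show ?thesis using Emap_Lmap_expv[OF b(2-4), of f] b(1) by simp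
  qed
qed

lemma Emap_nonzero_D:
  assumes f: "f \<in> Agr d j" and nz: "Emap d f b \<noteq> 0"
  shows "is_mono d b \<and> b 0 + b 1 + b 2 + 1 = j"
proof -
  have m: "is_mono d b" using Emap_eq_0_outside[of f d b] Agr_nonzero_D[OF f] nz by blast
  then obtain x y z where b: "b = expv x y z" "x < d" "y < d" "z < d"
    by (rule is_mono_obtain_expv)
  have "x + y + z + 1 = j"
  proof (rule ccontr)
    assume "x + y + z + 1 \<noteq> j"
    then have "f (expv (x+1) y z) = 0" "f (expv x (y+1) z) = 0" "f (expv x y (z+1)) = 0"
      using Agr_expv_eq_0[OF f] by simp_all
    then show False using nz b by (simp add: Emap_expv)
  qed
  then show ?thesis using m b by simp
qed

lemma Emap_Agr: assumes "f \<in> Agr d j" shows "Emap d f \<in> Agr d (j - 1)"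
  using Emap_nonzero_D[OF assms] unfolding Agr_def by force

lemma Emap_Agr_0: assumes "f \<in> Agr d 0" shows "Emap d f = 0"
  using Emap_nonzero_D[OF assms] by fastforce

lemma Lmap_Agr: assumes f: "f \<in> Agr d j" shows "Lmap d f \<in> Agr d (j + 1)"
  unfolding Agr_def
proof safe
  fix b assume nz: "Lmap d f b \<noteq> 0"
  then have m: "is_mono d b" by (auto simp: Lmap_def split: if_splits)
  then obtain x y z where b: "b = expv x y z" "x < d" "y < d" "z < d"
    by (rule is_mono_obtain_expv)
  have "x + y + z = j + 1"
  proof (rule ccontr)
    assume "x + y + z \<noteq> j + 1"
    then have "(if 0 < x then f (expv (x-1) y z) else 0) = 0"
      "(if 0 < y then f (expv x (y-1) z) else 0) = 0" "(if 0 < z then f (expv x y (z-1)) else 0) = 0"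
      using Agr_expv_eq_0[OF f] by simp_all
    then show False using nz b by (simp add: Lmap_expv)
  qed
  then show "is_mono d b" "b 0 + b 1 + b 2 = j + 1" using m b by simp_all
qed

section \<open>The \<open>S\<^sub>3\<close>-action and the standard-isotypic part\<close>

lemma permutes_3_fixes: "\<sigma> permutes {..<3} \<Longrightarrow> 3 \<le> i \<Longrightarrow> \<sigma> i = (i::nat)"
  by (simp add: permutes_def)

lemma is_mono_comp_permutes:
  assumes "\<sigma> permutes {..<3}"
  shows "is_mono d (b \<circ> \<sigma>) \<longleftrightarrow> is_mono d b"
proof -
  have "(\<forall>i<3. b (\<sigma> i) < d) \<longleftrightarrow> (\<forall>i<3. b i < d)"
    using permutes_image[OF assms] by (metis imageE image_eqI lessThan_iff)
  then show ?thesis using permutes_3_fixes[OF assms] by (simp add: is_mono_def)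
qed

lemma fun_upd_comp_inj: "inj \<sigma> \<Longrightarrow> (b \<circ> \<sigma>)(k := v) = (b(\<sigma> k := v)) \<circ> \<sigma>"
  by (auto simp: fun_eq_iff inj_eq)

lemma Emap_actA:
  assumes \<sigma>: "\<sigma> permutes {..<3}"
  shows "Emap d (actA \<sigma> f) = actA \<sigma> (Emap d f)"
proof
  fix b
  have "actA \<sigma> (Emap d f) b = (\<Sum>k<3. Ecoeff d (b (\<sigma> k)) * f ((b(\<sigma> k := b (\<sigma> k) + 1)) \<circ> \<sigma>))"
    by (simp add: actA_def Emap_eq fun_upd_comp_inj[OF permutes_inj[OF \<sigma>]])
  also have "\<dots> = (\<Sum>k<3. Ecoeff d (b k) * f ((b(k := b k + 1)) \<circ> \<sigma>))"
    using sum.permute[OF \<sigma>, of "\<lambda>k. Ecoeff d (b k) * f ((b(k := b k + 1)) \<circ> \<sigma>)"]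
    by (simp add: comp_def)
  also have "\<dots> = Emap d (actA \<sigma> f) b" by (simp add: actA_def Emap_eq)
  finally show "Emap d (actA \<sigma> f) b = actA \<sigma> (Emap d f) b" by simp
qed

lemma Lmap_actA:
  assumes \<sigma>: "\<sigma> permutes {..<3}"
  shows "Lmap d (actA \<sigma> f) = actA \<sigma> (Lmap d f)"
proof
  fix b
  show "Lmap d (actA \<sigma> f) b = actA \<sigma> (Lmap d f) b"
  proof (cases "is_mono d b")
    case False
    then show ?thesis using is_mono_comp_permutes[OF \<sigma>] by (simp add: Lmap_def actA_def)
  next
    case True
    have "actA \<sigma> (Lmap d f) b
        = (\<Sum>k<3. if 0 < (b \<circ> \<sigma>) k then f ((b \<circ> \<sigma>)(k := (b \<circ> \<sigma>) k - 1)) else 0)"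
      using True is_mono_comp_permutes[OF \<sigma>] by (simp add: actA_def Lmap_def)
    also have "\<dots> = (\<Sum>k<3. if 0 < b (\<sigma> k) then f ((b(\<sigma> k := b (\<sigma> k) - 1)) \<circ> \<sigma>) else 0)"
      by (simp only: fun_upd_comp_inj[OF permutes_inj[OF \<sigma>]] comp_apply)
    also have "\<dots> = (\<Sum>k<3. if 0 < b k then f ((b(k := b k - 1)) \<circ> \<sigma>) else 0)"
      using sum.permute[OF \<sigma>, of "\<lambda>k. if 0 < b k then f ((b(k := b k - 1)) \<circ> \<sigma>) else 0"]
      by (simp add: comp_def)
    also have "\<dots> = Lmap d (actA \<sigma> f) b" using True by (simp add: actA_def Lmap_def)
    finally show ?thesis by simp
  qed
qed

lemma Agr_actA:
  assumes \<sigma>: "\<sigma> permutes {..<3}" and f: "f \<in> Agr d j"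
  shows "actA \<sigma> f \<in> Agr d j"
  unfolding Agr_def
proof safe
  fix e assume "actA \<sigma> f e \<noteq> 0"
  then have "is_mono d (e \<circ> \<sigma>)" "(\<Sum>i<3. (e \<circ> \<sigma>) i) = j"
    using Agr_nonzero_D[OF f, of "e \<circ> \<sigma>"] by (simp_all add: actA_def sum_lessThan_3)
  moreover have "(\<Sum>i<3. (e \<circ> \<sigma>) i) = (\<Sum>i<3. e i)"
    using sum.permute[OF \<sigma>, of e] by simp
  ultimately show "is_mono d e" "e 0 + e 1 + e 2 = j"
    using is_mono_comp_permutes[OF \<sigma>] by (simp_all add: sum_lessThan_3)
qed

definition swap01 :: "nat \<Rightarrow> nat" where "swap01 = Transposition.transpose 0 1"
definition rot3 :: "nat \<Rightarrow> nat" where "rot3 = Transposition.transpose 0 1 \<circ> Transposition.transpose 1 2"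

lemma swap01_permutes: "swap01 permutes {..<3}"
  unfolding swap01_def by (rule permutes_swap_id) auto

lemma rot3_permutes: "rot3 permutes {..<3}"
  unfolding rot3_def by (rule permutes_compose; rule permutes_swap_id) auto

lemma swap01_apply [simp]: "swap01 0 = 1" "swap01 (Suc 0) = 0" "swap01 2 = 2"
  by (auto simp: swap01_def Transposition.transpose_def)

lemma rot3_apply [simp]: "rot3 0 = 1" "rot3 (Suc 0) = 2" "rot3 2 = 0"
  by (auto simp: rot3_def Transposition.transpose_def)

lemma expv_comp_swap01 [simp]: "expv a b c \<circ> swap01 = expv b a c"
  by (auto simp: fun_eq_iff swap01_def expv_def Transposition.transpose_def)

lemma expv_comp_rot3 [simp]: "expv a b c \<circ> rot3 = expv b c a"
  by (auto simp: fun_eq_iff rot3_def expv_def Transposition.transpose_def)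

text \<open>Copies of the standard representation inside \<open>W\<close> correspond to vectors \<open>w\<close> that are
  anti-invariant under a transposition and whose orbit under the 3-cycle sums to zero.\<close>
definition std_part :: "((nat \<Rightarrow> nat) \<Rightarrow> 'k::field) set \<Rightarrow> ((nat \<Rightarrow> nat) \<Rightarrow> 'k) set" where
  "std_part W = {w \<in> W. actA swap01 w = - w \<and> w + actA rot3 w + actA rot3 (actA rot3 w) = 0}"

lemma actA_add: "actA \<sigma> (f + g) = actA \<sigma> f + actA \<sigma> g"
  by (simp add: actA_def fun_eq_iff)

lemma actA_zero: "actA \<sigma> 0 = 0"
  by (simp add: actA_def fun_eq_iff)

lemma std_part_image:
  assumes into: "\<And>f. f \<in> W \<Longrightarrow> g f \<in> W'"
    and add: "\<And>f h. g (f + h) = g f + g h" and zero: "g 0 = 0"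
    and swap: "\<And>f. g (actA swap01 f) = actA swap01 (g f)"
    and rot: "\<And>f. g (actA rot3 f) = actA rot3 (g f)"
    and w: "w \<in> std_part W"
  shows "g w \<in> std_part W'"
proof -
  have uminus: "g (- f) = - g f" for f
    using add[of f "- f"] zero by (simp add: minus_unique[symmetric])
  have "g w + actA rot3 (g w) + actA rot3 (actA rot3 (g w))
      = g (w + actA rot3 w + actA rot3 (actA rot3 w))"
    by (simp add: add rot)
  moreover have "actA swap01 (g w) = - g w"
    using w by (simp add: std_part_def swap[symmetric] uminus)
  ultimately show ?thesis using w by (simp add: std_part_def into zero)
qed

section \<open>A basis of the standard-isotypic part of \<open>A(d)\<^sub>j\<close>\<close>

definition fscale :: "'k::field \<Rightarrow> ((nat \<Rightarrow> nat) \<Rightarrow> 'k) \<Rightarrow> ((nat \<Rightarrow> nat) \<Rightarrow> 'k)" where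
  "fscale c f = (\<lambda>e. c * f e)"

interpretation vF: vector_space "fscale :: 'k::field \<Rightarrow> _"
  by unfold_locales (simp_all add: fscale_def fun_eq_iff algebra_simps)

lemma order3_cases:
  fixes a b c :: nat
  obtains "c < b \<and> b < a" | "b < a \<and> a < c" | "a < c \<and> c < b" | "c < a \<and> a < b"
    | "b < c \<and> c < a" | "a < b \<and> b < c" | "a = c \<and> a \<noteq> b" | "b = c \<and> a \<noteq> b"
    | "a = b \<and> a \<noteq> c" | "a = b \<and> b = c"
  by linarith

text \<open>An \<open>S\<^sub>3\<close>-orbit of exponent vectors meets these patterns twice if its entries are distinct,
  once if exactly two entries agree and never if all agree: the multiplicity of \<open>Std\<close> in the
  permutation representation on the orbit.\<close>
fun std_rep :: "nat \<times> nat \<times> nat \<Rightarrow> bool" where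
  "std_rep (a, b, c) \<longleftrightarrow> (c < b \<and> b < a) \<or> (b < a \<and> a < c) \<or> (a = c \<and> a \<noteq> b)"

lemma alternating_eq_0_if_eq_0_on_std_rep:
  fixes F :: "nat \<Rightarrow> nat \<Rightarrow> nat \<Rightarrow> 'k::field_char_0"
  assumes swap: "\<And>a b c. F b a c = - F a b c"
    and cycle: "\<And>a b c. F a b c + F b c a + F c a b = 0"
    and rep: "\<And>a b c. std_rep (a, b, c) \<Longrightarrow> F a b c = 0"
  shows "F x y z = 0"
proof -
  have diag: "F a a c = 0" for a c
    using swap[of a a c] by simp
  have rep_rot: "F a b c = 0" if "a < c" "c < b" for a b c
    using cycle[of a b c] rep[of b c a] rep[of c a b] that by simp
  from order3_cases[where a = x and b = y and c = z] show ?thesis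
  proof cases
    case 1
    then show ?thesis by (simp add: rep)
  next
    case 2
    then show ?thesis by (simp add: rep)
  next
    case 3
    then show ?thesis by (simp add: rep_rot)
  next
    case 4
    then show ?thesis using swap[of y x z] rep[of y x z] by simp
  next
    case 5
    then show ?thesis using swap[of y x z] rep_rot[of y z x] by simp
  next
    case 6
    then show ?thesis using swap[of y x z] rep[of y x z] by auto
  next
    case 7
    then show ?thesis by (simp add: rep)
  next
    case 8
    then show ?thesis using cycle[of x y y] diag[of y x] rep[of y x y] by simp
  next
    case 9
    then show ?thesis by (simp add: diag)
  next
    case 10
    then show ?thesis by (simp add: diag)
  qed
qed

text \<open>The unique function that is antisymmetric in its first two arguments, has vanishing cyclic
  sums, and takes the values \<open>g\<close> on the \<open>std_rep\<close> patterns.\<close>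
definition alt_ext :: "(nat \<Rightarrow> nat \<Rightarrow> nat \<Rightarrow> 'k::ab_group_add) \<Rightarrow> nat \<Rightarrow> nat \<Rightarrow> nat \<Rightarrow> 'k" where
  "alt_ext g a b c =
    (if c < b \<and> b < a then g a b c
     else if b < a \<and> a < c then g a b c
     else if a < c \<and> c < b then - g b c a - g c a b
     else if c < a \<and> a < b then - g b a c
     else if b < c \<and> c < a then g a c b + g c b a
     else if a < b \<and> b < c then - g b a c
     else if a = c \<and> a \<noteq> b then g a b c
     else if b = c \<and> a \<noteq> b then - g b a b
     else 0)"

lemma alt_ext_swap: "alt_ext g b a c = - alt_ext g a b c"
  by (cases rule: order3_cases[of a b c]) (auto simp: alt_ext_def)

lemma alt_ext_cycle: "alt_ext g a b c + alt_ext g b c a + alt_ext g c a b = 0"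
  by (cases rule: order3_cases[of a b c]) (auto simp: alt_ext_def)

lemma alt_ext_std_rep: "std_rep (a, b, c) \<Longrightarrow> alt_ext g a b c = g a b c"
  by (auto simp: alt_ext_def)

definition triples :: "nat \<Rightarrow> int \<Rightarrow> (nat \<times> nat \<times> nat) set" where
  "triples d n = {(a, b, c). a < d \<and> b < d \<and> c < d \<and> int (a + b + c) = n}"

lemma finite_triples: "finite (triples d n)"
  by (rule finite_subset[of _ "{..<d} \<times> {..<d} \<times> {..<d}"]) (auto simp: triples_def)

definition std_reps :: "nat \<Rightarrow> int \<Rightarrow> (nat \<times> nat \<times> nat) set" where
  "std_reps d n = {t \<in> triples d n. std_rep t}"

lemma finite_std_reps: "finite (std_reps d n)"
  using finite_triples by (simp add: std_reps_def)

definition std_vec :: "nat \<Rightarrow> nat \<Rightarrow> (nat \<Rightarrow> nat \<Rightarrow> nat \<Rightarrow> 'k::field) \<Rightarrow> ((nat \<Rightarrow> nat) \<Rightarrow> 'k)" where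
  "std_vec d j g = (\<lambda>e. if is_mono d e \<and> e 0 + e 1 + e 2 = j then alt_ext g (e 0) (e 1) (e 2) else 0)"

lemma std_vec_in_std_part: "std_vec d j g \<in> std_part (Agr d j)"
proof -
  have swap: "is_mono d (e \<circ> swap01) \<longleftrightarrow> is_mono d e" for e
    using is_mono_comp_permutes[OF swap01_permutes] .
  have rot: "is_mono d (e \<circ> rot3) \<longleftrightarrow> is_mono d e" for e
    using is_mono_comp_permutes[OF rot3_permutes] .
  have "actA swap01 (std_vec d j g) = - std_vec d j g"
  proof
    fix e
    show "actA swap01 (std_vec d j g) e = (- std_vec d j g) e"
      using swap[of e] alt_ext_swap[of g "e 0" "e 1" "e 2"]
      by (simp add: actA_def std_vec_def add.commute)
  qed
  moreover have "std_vec d j g + actA rot3 (std_vec d j g) + actA rot3 (actA rot3 (std_vec d j g)) = 0"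
  proof
    fix e
    show "(std_vec d j g + actA rot3 (std_vec d j g) + actA rot3 (actA rot3 (std_vec d j g))) e = 0 e"
      using rot[of e] rot[of "e \<circ> rot3"] alt_ext_cycle[of g "e 0" "e 1" "e 2"]
      by (simp add: actA_def std_vec_def add.commute add.left_commute)
  qed
  moreover have "std_vec d j g \<in> Agr d j"
    by (auto simp: Agr_def std_vec_def split: if_splits)
  ultimately show ?thesis by (simp add: std_part_def)
qed

lemma std_vec_expv: "(a, b, c) \<in> std_reps d (int j) \<Longrightarrow> std_vec d j g (expv a b c) = g a b c"
  by (auto simp: std_reps_def triples_def std_vec_def alt_ext_std_rep)

lemma std_part_Agr_expv:
  assumes h: "h \<in> std_part (Agr d j)"
  shows "h (expv b a c) = - h (expv a b c)" "h (expv a b c) + h (expv b c a) + h (expv c a b) = 0"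
proof -
  have "actA swap01 h (expv a b c) = - h (expv a b c)" using h by (simp add: std_part_def)
  then show "h (expv b a c) = - h (expv a b c)" by (simp add: actA_def)
  have "(h + actA rot3 h + actA rot3 (actA rot3 h)) (expv a b c) = 0" using h by (simp add: std_part_def)
  then show "h (expv a b c) + h (expv b c a) + h (expv c a b) = 0" by (simp add: actA_def o_assoc)
qed

fun expv_triple :: "nat \<times> nat \<times> nat \<Rightarrow> nat \<Rightarrow> nat" where
  "expv_triple (a, b, c) = expv a b c"

lemma std_part_Agr_eq_0:
  fixes h :: "(nat \<Rightarrow> nat) \<Rightarrow> 'k::field_char_0"
  assumes h: "h \<in> std_part (Agr d j)" and zero: "\<And>t. t \<in> std_reps d (int j) \<Longrightarrow> h (expv_triple t) = 0"
  shows "h = 0"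
proof
  fix e
  have hA: "h \<in> Agr d j" using h by (simp add: std_part_def)
  have "h (expv a b c) = 0" for a b c
  proof (rule alternating_eq_0_if_eq_0_on_std_rep[where F = "\<lambda>a b c. h (expv a b c)"])
    fix a b c assume rep: "std_rep (a, b, c)"
    show "h (expv a b c) = 0"
    proof (rule ccontr)
      assume "h (expv a b c) \<noteq> 0"
      then have "(a, b, c) \<in> std_reps d (int j)"
        using Agr_nonzero_D[OF hA, of "expv a b c"] rep by (simp add: std_reps_def triples_def)
      then show False using zero[of "(a, b, c)"] \<open>h (expv a b c) \<noteq> 0\<close> by simp
    qed
  qed (rule std_part_Agr_expv[OF h])+
  then show "h e = 0 e"
    by (metis Agr_nonzero_D[OF hA] is_mono_eq_expv zero_fun_apply)
qed

definition std_basis :: "nat \<Rightarrow> nat \<Rightarrow> nat \<times> nat \<times> nat \<Rightarrow> ((nat \<Rightarrow> nat) \<Rightarrow> 'k::field)" where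
  "std_basis d j t = std_vec d j (\<lambda>a b c. if (a, b, c) = t then 1 else 0)"

lemma std_basis_expv:
  "s \<in> std_reps d (int j) \<Longrightarrow> std_basis d j t (expv_triple s) = (if s = t then 1 else 0)"
  by (cases s) (auto simp: std_basis_def std_vec_expv)

lemma inj_on_std_basis: "inj_on (std_basis d j :: _ \<Rightarrow> ((nat \<Rightarrow> nat) \<Rightarrow> 'k::field)) (std_reps d (int j))"
proof (rule inj_onI)
  fix s t assume s: "s \<in> std_reps d (int j)" and "t \<in> std_reps d (int j)"
    and eq: "(std_basis d j s :: (nat \<Rightarrow> nat) \<Rightarrow> 'k) = std_basis d j t"
  have "(std_basis d j s :: (nat \<Rightarrow> nat) \<Rightarrow> 'k) (expv_triple s) = 1"
    using std_basis_expv[OF s, of s] by simp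
  moreover have "(std_basis d j t :: (nat \<Rightarrow> nat) \<Rightarrow> 'k) (expv_triple s) = (if s = t then 1 else 0)"
    by (rule std_basis_expv[OF s])
  ultimately show "s = t" using eq by (simp split: if_splits)
qed

lemma sum_std_basis_expv:
  assumes s: "s \<in> std_reps d (int j)"
  shows "(\<Sum>t\<in>std_reps d (int j). u t * (std_basis d j t :: (nat \<Rightarrow> nat) \<Rightarrow> 'k::field) (expv_triple s)) = u s"
  using s finite_std_reps by (simp add: std_basis_expv if_distrib[of "\<lambda>x. _ * x"] cong: if_cong)

lemma actA_fscale: "actA \<sigma> (fscale c f) = fscale c (actA \<sigma> f)"
  by (simp add: actA_def fscale_def)

lemma subspace_Agr: "vF.subspace (Agr d j :: ((nat \<Rightarrow> nat) \<Rightarrow> 'k::field) set)"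
  unfolding vF.subspace_def Agr_def by (auto simp: fscale_def) (metis add.right_neutral)+

lemma subspace_std_part:
  assumes W: "vF.subspace W"
  shows "vF.subspace (std_part W :: ((nat \<Rightarrow> nat) \<Rightarrow> 'k::field) set)"
  unfolding vF.subspace_def
proof (intro conjI ballI allI)
  show "0 \<in> std_part W" using vF.subspace_0[OF W] by (simp add: std_part_def actA_zero)
next
  fix f g :: "(nat \<Rightarrow> nat) \<Rightarrow> 'k" assume "f \<in> std_part W" "g \<in> std_part W"
  moreover have "(f + g) + actA rot3 (f + g) + actA rot3 (actA rot3 (f + g))
     = (f + actA rot3 f + actA rot3 (actA rot3 f)) + (g + actA rot3 g + actA rot3 (actA rot3 g))"
    by (simp add: actA_add algebra_simps)
  ultimately show "f + g \<in> std_part W"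
    using vF.subspace_add[OF W] by (simp add: std_part_def actA_add)
next
  fix c and f :: "(nat \<Rightarrow> nat) \<Rightarrow> 'k" assume "f \<in> std_part W"
  moreover have "fscale c f + actA rot3 (fscale c f) + actA rot3 (actA rot3 (fscale c f))
     = fscale c (f + actA rot3 f + actA rot3 (actA rot3 f))"
    by (simp add: actA_def fscale_def fun_eq_iff algebra_simps)
  ultimately show "fscale c f \<in> std_part W"
    using vF.subspace_scale[OF W] by (simp add: std_part_def actA_fscale)
qed

lemma sum_fun_apply: "(\<Sum>a\<in>A. g a) x = (\<Sum>a\<in>A. g a x)"
  by (induction A rule: infinite_finite_induct) auto

lemma std_basis_independent:
  "vF.independent (std_basis d j ` std_reps d (int j) :: ((nat \<Rightarrow> nat) \<Rightarrow> 'k::field) set)"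
proof (rule vF.independent_if_scalars_zero)
  show "finite (std_basis d j ` std_reps d (int j) :: ((nat \<Rightarrow> nat) \<Rightarrow> 'k) set)"
    using finite_std_reps by simp
next
  fix u :: "_ \<Rightarrow> 'k" and x :: "(nat \<Rightarrow> nat) \<Rightarrow> 'k"
  assume sum: "(\<Sum>x\<in>std_basis d j ` std_reps d (int j). fscale (u x) x) = 0"
    and x: "x \<in> std_basis d j ` std_reps d (int j)"
  then obtain s where s: "s \<in> std_reps d (int j)" "x = std_basis d j s" by auto
  have "0 = (\<Sum>x\<in>std_basis d j ` std_reps d (int j). fscale (u x) x) (expv_triple s)"
    using sum by simp
  also have "\<dots> = (\<Sum>t\<in>std_reps d (int j). u (std_basis d j t) * (std_basis d j t :: (nat \<Rightarrow> nat) \<Rightarrow> 'k) (expv_triple s))"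
    by (simp add: sum_fun_apply fscale_def sum.reindex[OF inj_on_std_basis])
  also have "\<dots> = u x" using sum_std_basis_expv[OF s(1)] s(2) by simp
  finally show "u x = 0" by simp
qed

lemma std_part_Agr_eq_span:
  "std_part (Agr d j) = vF.span (std_basis d j ` std_reps d (int j) :: ((nat \<Rightarrow> nat) \<Rightarrow> 'k::field_char_0) set)"
proof (rule vF.span_subspace[symmetric])
  show basis: "std_basis d j ` std_reps d (int j) \<subseteq> (std_part (Agr d j) :: ((nat \<Rightarrow> nat) \<Rightarrow> 'k) set)"
    using std_vec_in_std_part by (auto simp: std_basis_def)
  show sub: "vF.subspace (std_part (Agr d j) :: ((nat \<Rightarrow> nat) \<Rightarrow> 'k) set)"
    by (rule subspace_std_part[OF subspace_Agr])
  show "std_part (Agr d j) \<subseteq> vF.span (std_basis d j ` std_reps d (int j) :: ((nat \<Rightarrow> nat) \<Rightarrow> 'k) set)"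
  proof
    fix f :: "(nat \<Rightarrow> nat) \<Rightarrow> 'k" assume f: "f \<in> std_part (Agr d j)"
    define g where "g = (\<Sum>t\<in>std_reps d (int j). fscale (f (expv_triple t)) (std_basis d j t :: (nat \<Rightarrow> nat) \<Rightarrow> 'k))"
    have "g \<in> vF.span (std_basis d j ` std_reps d (int j))"
      unfolding g_def by (intro vF.span_sum vF.span_scale vF.span_base) auto
    moreover have "f - g = 0"
    proof (rule std_part_Agr_eq_0)
      have "g \<in> std_part (Agr d j)"
        using basis unfolding g_def by (intro vF.subspace_sum[OF sub] vF.subspace_scale[OF sub]) auto
      then show "f - g \<in> std_part (Agr d j)" using vF.subspace_diff[OF sub f] by simp
      fix t assume "t \<in> std_reps d (int j)"
      then show "(f - g) (expv_triple t) = 0"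
        using sum_std_basis_expv[of t d j "\<lambda>t. f (expv_triple t)"]
        by (simp add: g_def sum_fun_apply fscale_def)
    qed
    ultimately show "f \<in> vF.span (std_basis d j ` std_reps d (int j))" by simp
  qed
qed

lemma dim_std_part_Agr:
  "vF.dim (std_part (Agr d j) :: ((nat \<Rightarrow> nat) \<Rightarrow> 'k::field_char_0) set) = card (std_reps d (int j))"
  unfolding std_part_Agr_eq_span vF.dim_span_eq_card_independent[OF std_basis_independent]
  by (rule card_image[OF inj_on_std_basis])

section \<open>\<open>E\<close> maps the standard-isotypic part onto that of the next lower degree\<close>

lemma Emap_add: "Emap d (f + g) = Emap d f + Emap d g"
  by (simp add: Emap_eq fun_eq_iff sum.distrib algebra_simps)

lemma Emap_fscale: "Emap d (fscale c f) = fscale c (Emap d f)"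
  by (simp add: Emap_eq fscale_def fun_eq_iff sum_distrib_left algebra_simps)

lemma Lmap_add: "Lmap d (f + g) = Lmap d f + Lmap d g"
  by (auto simp: Lmap_def fun_eq_iff sum.distrib[symmetric] intro!: sum.cong)

lemma Lmap_fscale: "Lmap d (fscale c f) = fscale c (Lmap d f)"
  by (auto simp: Lmap_def fscale_def fun_eq_iff sum_distrib_left intro!: sum.cong)

lemma linear_Emap: "Vector_Spaces.linear fscale fscale (Emap d :: _ \<Rightarrow> ((nat \<Rightarrow> nat) \<Rightarrow> 'k::field))"
  by (simp add: Vector_Spaces.linear_iff vF.vector_space_axioms Emap_add Emap_fscale)

lemma linear_Emap_Lmap:
  "Vector_Spaces.linear fscale fscale (\<lambda>f. Emap d (Lmap d f) :: ((nat \<Rightarrow> nat) \<Rightarrow> 'k::field))"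
  by (simp add: Vector_Spaces.linear_iff vF.vector_space_axioms Emap_add Emap_fscale Lmap_add Lmap_fscale)

interpretation Emap: Vector_Spaces.linear fscale fscale "Emap d :: _ \<Rightarrow> ((nat \<Rightarrow> nat) \<Rightarrow> 'k::field)"
  by (rule linear_Emap)

interpretation Lmap: Vector_Spaces.linear fscale fscale "Lmap d :: _ \<Rightarrow> ((nat \<Rightarrow> nat) \<Rightarrow> 'k::field)"
  by (simp add: Vector_Spaces.linear_iff vF.vector_space_axioms Lmap_add Lmap_fscale)

lemma Emap_std_part:
  "f \<in> std_part (Agr d j) \<Longrightarrow> Emap d f \<in> std_part (Agr d (j - 1))"
  by (rule std_part_image[OF Emap_Agr Emap.add Emap.zero Emap_actA[OF swap01_permutes] Emap_actA[OF rot3_permutes]])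

lemma Lmap_std_part:
  "f \<in> std_part (Agr d j) \<Longrightarrow> Lmap d f \<in> std_part (Agr d (j + 1))"
  by (rule std_part_image[OF Lmap_Agr Lmap.add Lmap.zero Lmap_actA[OF swap01_permutes] Lmap_actA[OF rot3_permutes]])

lemma fscale_eq_0_iff: "fscale c f = 0 \<longleftrightarrow> c = 0 \<or> f = 0"
  by (auto simp: fscale_def fun_eq_iff)

lemma Lmap_Emap_plus_eq_0:
  fixes f :: "(nat \<Rightarrow> nat) \<Rightarrow> 'k::field"
  assumes "2 * m < 3 * (d - 1)" "f \<in> Agr d m" "Emap d (Lmap d f) + fscale (of_nat t) f = 0"
  shows "Lmap d (Emap d f) + fscale (of_nat (3 * (d - 1) - 2 * m + t)) f = 0"
proof -
  have "(of_int (3 * (int d - 1) - 2 * int m) :: 'k) = of_nat (3 * (d - 1) - 2 * m)"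
    using assms(1) by (simp add: of_nat_diff)
  then show ?thesis
    using assms(3) Emap_Lmap_commutator[OF assms(2)] by (simp add: fscale_def fun_eq_iff algebra_simps)
qed

text \<open>Below the middle degree \<open>E L = L E + \<mu>\<close> with \<open>\<mu> > 0\<close>, so by induction on the degree
  \<open>E L + t\<close> is injective for every \<open>t \<ge> 0\<close>.\<close>
lemma Emap_Lmap_plus_injective:
  fixes f :: "(nat \<Rightarrow> nat) \<Rightarrow> 'k::field_char_0"
  assumes "2 * m < 3 * (d - 1)" "f \<in> Agr d m" "Emap d (Lmap d f) + fscale (of_nat t) f = 0"
  shows "f = 0"
  using assms
proof (induction m arbitrary: f t)
  case (0 f t)
  let ?c = "3 * (d - 1) - 2 * 0 + t"
  have "Lmap d (Emap d f) + fscale (of_nat ?c) f = 0" by (rule Lmap_Emap_plus_eq_0[OF "0.prems"])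
  moreover have "Emap d f = 0" using Emap_Agr_0[OF "0.prems"(2)] .
  ultimately have "fscale (of_nat ?c) f = 0" by simp
  moreover have "?c \<noteq> 0" using "0.prems"(1) by simp
  ultimately show ?case using fscale_eq_0_iff of_nat_eq_0_iff by metis
next
  case (Suc m f t)
  let ?c = "3 * (d - 1) - 2 * Suc m + t"
  have L: "Lmap d (Emap d f) + fscale (of_nat ?c) f = 0" by (rule Lmap_Emap_plus_eq_0[OF Suc.prems])
  then have "Emap d (Lmap d (Emap d f)) + fscale (of_nat ?c) (Emap d f) = 0"
    using Emap.add[of d] Emap_fscale Emap.zero by metis
  moreover have "Emap d f \<in> Agr d m" using Emap_Agr[OF Suc.prems(2)] by simp
  moreover have "2 * m < 3 * (d - 1)" using Suc.prems(1) by simp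
  ultimately have "Emap d f = 0" using Suc.IH by blast
  then have "fscale (of_nat ?c) f = 0" using L Lmap.zero by simp
  moreover have "?c \<noteq> 0" using Suc.prems(1) by simp
  ultimately show ?case using fscale_eq_0_iff of_nat_eq_0_iff by metis
qed

lemma finite_span_std_part_Agr:
  "\<exists>A. finite A \<and> (std_part (Agr d j) :: ((nat \<Rightarrow> nat) \<Rightarrow> 'k::field_char_0) set) \<subseteq> vF.span A"
  by (rule exI[of _ "std_basis d j ` std_reps d (int j)"]) (simp add: finite_std_reps std_part_Agr_eq_span)

text \<open>\<open>E L\<close> is an injective endomorphism of the finite-dimensional space \<open>std_part (Agr d (j - 1))\<close>,
  hence onto; in particular so is \<open>E\<close>.\<close>
lemma Emap_std_part_onto:
  assumes j: "1 \<le> j" "2 * j \<le> 3 * (d - 1)"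
  shows "Emap d ` std_part (Agr d j) = (std_part (Agr d (j - 1)) :: ((nat \<Rightarrow> nat) \<Rightarrow> 'k::field_char_0) set)"
proof
  show "Emap d ` std_part (Agr d j) \<subseteq> (std_part (Agr d (j - 1)) :: ((nat \<Rightarrow> nat) \<Rightarrow> 'k) set)"
    using Emap_std_part by (rule image_subsetI)
next
  define S :: "((nat \<Rightarrow> nat) \<Rightarrow> 'k) set" where "S = std_part (Agr d (j - 1))"
  have L: "Lmap d f \<in> std_part (Agr d j)" if "f \<in> S" for f
    using Lmap_std_part[of f d "j - 1"] that j(1) by (simp add: S_def)
  have into: "(\<lambda>f. Emap d (Lmap d f)) ` S \<subseteq> S"
  proof (rule image_subsetI)
    fix f assume "f \<in> S"
    then show "Emap d (Lmap d f) \<in> S" using Emap_std_part[OF L] j(1) by (simp add: S_def)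
  qed
  have inj: "inj_on (\<lambda>f. Emap d (Lmap d f)) S"
  proof (rule inj_onI)
    fix f g assume f: "f \<in> S" and g: "g \<in> S" and eq: "Emap d (Lmap d f) = Emap d (Lmap d g)"
    have "f \<in> Agr d (j - 1)" "g \<in> Agr d (j - 1)" using f g by (simp_all add: S_def std_part_def)
    then have "f - g \<in> Agr d (j - 1)" by (rule vF.subspace_diff[OF subspace_Agr])
    moreover have "Emap d (Lmap d (f - g)) + fscale (of_nat 0) (f - g) = 0"
      using eq by (simp add: Lmap.diff Emap.diff fscale_def zero_fun_def)
    moreover have "2 * (j - 1) < 3 * (d - 1)" using j by simp
    ultimately have "f - g = 0" using Emap_Lmap_plus_injective by blast
    then show "f = g" by simp
  qed
  obtain A where A: "finite A" "S \<subseteq> vF.span A" using finite_span_std_part_Agr S_def by blast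
  have "vF.subspace S" unfolding S_def by (rule subspace_std_part[OF subspace_Agr])
  then have "(\<lambda>f. Emap d (Lmap d f)) ` S = S"
    by (rule vF.inj_on_endomorphism_imp_onto[OF linear_Emap_Lmap _ A inj into])
  then show "std_part (Agr d (j - 1)) \<subseteq> Emap d ` (std_part (Agr d j) :: ((nat \<Rightarrow> nat) \<Rightarrow> 'k) set)"
    using L unfolding S_def by (auto simp: image_iff)
qed

interpretation vFF: vector_space_pair "fscale :: 'k::field \<Rightarrow> _" "fscale :: 'k::field \<Rightarrow> _"
  by unfold_locales

lemma dim_kernel_Emap_std_part:
  assumes "2 * j \<le> 3 * (d - 1)"
  shows "int (vF.dim {f \<in> (std_part (Agr d j) :: ((nat \<Rightarrow> nat) \<Rightarrow> 'k::field_char_0) set). Emap d f = 0})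
     = int (card (std_reps d (int j))) - int (card (std_reps d (int j - 1)))"
proof (cases "j = 0")
  case True
  then have "{f \<in> (std_part (Agr d j) :: ((nat \<Rightarrow> nat) \<Rightarrow> 'k) set). Emap d f = 0} = std_part (Agr d j)"
    using Emap_Agr_0 by (auto simp: std_part_def)
  moreover have "std_reps d (int j - 1) = {}" using True by (auto simp: std_reps_def triples_def)
  ultimately show ?thesis using dim_std_part_Agr by simp
next
  case False
  obtain A where A: "finite A" "(std_part (Agr d j) :: ((nat \<Rightarrow> nat) \<Rightarrow> 'k) set) \<subseteq> vF.span A"
    using finite_span_std_part_Agr by blast
  have onto: "Emap d ` std_part (Agr d j) = (std_part (Agr d (j - 1)) :: ((nat \<Rightarrow> nat) \<Rightarrow> 'k) set)"
    using False assms by (intro Emap_std_part_onto) auto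
  have "vF.dim (std_part (Agr d j) :: ((nat \<Rightarrow> nat) \<Rightarrow> 'k) set)
      = vF.dim {f \<in> (std_part (Agr d j) :: ((nat \<Rightarrow> nat) \<Rightarrow> 'k) set). Emap d f = 0} + vF.dim (std_part (Agr d (j - 1)) :: ((nat \<Rightarrow> nat) \<Rightarrow> 'k) set)"
    using vFF.rank_nullity_onto[OF linear_Emap subspace_std_part[OF subspace_Agr] A onto] by simp
  moreover have "int (j - 1) = int j - 1" using False by simp
  ultimately show ?thesis by (simp add: dim_std_part_Agr)
qed

section \<open>Equivariant maps from the standard representation\<close>

definition hscale :: "'k::field \<Rightarrow> ((nat \<Rightarrow> 'k) \<Rightarrow> ((nat \<Rightarrow> nat) \<Rightarrow> 'k)) \<Rightarrow> ((nat \<Rightarrow> 'k) \<Rightarrow> ((nat \<Rightarrow> nat) \<Rightarrow> 'k))" where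
  "hscale c \<phi> = (\<lambda>v e. c * \<phi> v e)"

interpretation vH: vector_space "hscale :: 'k::field \<Rightarrow> _"
  by unfold_locales (simp_all add: hscale_def fun_eq_iff algebra_simps)

interpretation vHF: vector_space_pair "hscale :: 'k::field \<Rightarrow> _" "fscale :: 'k::field \<Rightarrow> _"
  by unfold_locales

definition sv01 :: "nat \<Rightarrow> 'k::field" where "sv01 = (\<lambda>i. if i = 0 then 1 else if i = 1 then -1 else 0)"
definition sv12 :: "nat \<Rightarrow> 'k::field" where "sv12 = (\<lambda>i. if i = 1 then 1 else if i = 2 then -1 else 0)"
definition sv20 :: "nat \<Rightarrow> 'k::field" where "sv20 = (\<lambda>i. if i = 2 then 1 else if i = 0 then -1 else 0)"

lemma sv_in_StdRep: "sv01 \<in> StdRep" "sv12 \<in> StdRep" "sv20 \<in> StdRep"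
  by (auto simp: StdRep_def sv01_def sv12_def sv20_def)

definition perm_of3 :: "nat \<Rightarrow> nat \<Rightarrow> nat \<Rightarrow> nat \<Rightarrow> nat" where
  "perm_of3 p q r = (\<lambda>i. if i = 0 then p else if i = 1 then q else if i = 2 then r else i)"

lemma perm_of3_apply [simp]: "perm_of3 p q r 0 = p" "perm_of3 p q r (Suc 0) = q" "perm_of3 p q r 2 = r"
  by (auto simp: perm_of3_def)

lemma perm_of3_comp_swap01: "perm_of3 p q r \<circ> swap01 = perm_of3 q p r"
  by (auto simp: fun_eq_iff perm_of3_def permutes_3_fixes[OF swap01_permutes])

lemma perm_of3_comp_rot3: "perm_of3 p q r \<circ> rot3 = perm_of3 q r p"
  by (auto simp: fun_eq_iff perm_of3_def permutes_3_fixes[OF rot3_permutes])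

lemma perm_of3_id: "perm_of3 0 (Suc 0) 2 = id"
  by (auto simp: perm_of3_def fun_eq_iff)

lemma permutes_3_cases:
  assumes \<sigma>: "\<sigma> permutes {..<3}"
  obtains "\<sigma> = perm_of3 0 1 2" | "\<sigma> = perm_of3 0 2 1" | "\<sigma> = perm_of3 1 0 2"
    | "\<sigma> = perm_of3 1 2 0" | "\<sigma> = perm_of3 2 0 1" | "\<sigma> = perm_of3 2 1 0"
proof -
  have eq: "\<sigma> = perm_of3 (\<sigma> 0) (\<sigma> 1) (\<sigma> 2)"
    using permutes_3_fixes[OF \<sigma>] by (auto simp: perm_of3_def fun_eq_iff)
  have "\<sigma> i \<in> {0, 1, 2}" if "i < 3" for i
    using permutes_in_image[OF \<sigma>, of i] that by auto
  then have "\<sigma> 0 \<in> {0, 1, 2}" "\<sigma> 1 \<in> {0, 1, 2}" "\<sigma> 2 \<in> {0, 1, 2}" by simp_all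
  moreover have "\<sigma> 0 \<noteq> \<sigma> 1" "\<sigma> 0 \<noteq> \<sigma> 2" "\<sigma> 1 \<noteq> \<sigma> 2"
    using permutes_inj[OF \<sigma>] by (auto simp: inj_eq)
  ultimately show thesis using that eq by auto
qed

lemma rot3_eq_perm_of3: "rot3 = perm_of3 1 2 0"
  using perm_of3_comp_rot3[of 0 1 2] by (simp add: perm_of3_id)

lemma swap01_eq_perm_of3: "swap01 = perm_of3 1 0 2"
  using perm_of3_comp_swap01[of 0 1 2] by (simp add: perm_of3_id)

lemma inv_perm_of3:
  assumes "perm_of3 p q r permutes {..<3}"
  shows "inv (perm_of3 p q r) p = 0" "inv (perm_of3 p q r) q = 1" "inv (perm_of3 p q r) r = 2"
  using permutes_inverses(2)[OF assms, of 0] permutes_inverses(2)[OF assms, of 1]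
    permutes_inverses(2)[OF assms, of 2] by simp_all

lemma StdRep_apply_1: "v \<in> StdRep \<Longrightarrow> v 1 = - v 0 - v 2"
  by (simp add: StdRep_def eq_neg_iff_add_eq_0 algebra_simps)

text \<open>The relations defining \<open>std_part\<close> determine all six values \<open>w (e \<circ> \<pi>)\<close> from two of them;
  this is what makes \<open>v \<mapsto> v\<^sub>0 w - v\<^sub>2 (rot3 \<cdot> w)\<close> equivariant.\<close>
lemma std_part_equivariance:
  fixes w :: "(nat \<Rightarrow> nat) \<Rightarrow> 'k::field" and v :: "nat \<Rightarrow> 'k"
  assumes swap: "\<And>e. w (e \<circ> swap01) = - w e"
    and cycle: "\<And>e. w e + w (e \<circ> rot3) + w (e \<circ> rot3 \<circ> rot3) = 0"
    and \<sigma>: "\<sigma> permutes {..<3}" and v: "v \<in> StdRep"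
  shows "v (inv \<sigma> 0) * w e - v (inv \<sigma> 2) * w (e \<circ> rot3) = v 0 * w (e \<circ> \<sigma>) - v 2 * w (e \<circ> \<sigma> \<circ> rot3)"
proof -
  define F where "F p q r = w (e \<circ> perm_of3 p q r)" for p q r
  have F_swap: "F q p r = - F p q r" for p q r
    using swap[of "e \<circ> perm_of3 p q r"] by (simp add: F_def o_assoc[symmetric] perm_of3_comp_swap01)
  have F_cycle: "F p q r + F q r p + F r p q = 0" for p q r
    using cycle[of "e \<circ> perm_of3 p q r"] by (simp add: F_def o_assoc[symmetric] perm_of3_comp_rot3)
  have we: "w e = F 0 1 2" and wr: "w (e \<circ> rot3) = F 1 2 0"
    by (simp_all add: F_def perm_of3_id rot3_eq_perm_of3)
  have F_vals: "F 1 0 2 = - F 0 1 2" "F 2 0 1 = - F 0 1 2 - F 1 2 0" "F 2 1 0 = - F 1 2 0"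
      "F 0 2 1 = F 0 1 2 + F 1 2 0"
    using F_swap[of 0 1 2] F_swap[of 1 2 0] F_swap[of 2 0 1] F_cycle[of 0 1 2] by algebra+
  have \<sigma>_rot3: "e \<circ> perm_of3 p q r \<circ> rot3 = e \<circ> perm_of3 q r p" for p q r
    by (simp add: o_assoc[symmetric] perm_of3_comp_rot3)
  note v1 = StdRep_apply_1[OF v]
  from permutes_3_cases[OF \<sigma>] show ?thesis
    by cases (use inv_perm_of3[of 0 1 2] inv_perm_of3[of 0 2 1] inv_perm_of3[of 1 0 2]
        inv_perm_of3[of 1 2 0] inv_perm_of3[of 2 0 1] inv_perm_of3[of 2 1 0] \<sigma> in
        \<open>simp_all add: we wr \<sigma>_rot3 F_def[symmetric] F_vals[simplified] v1[simplified] algebra_simps\<close>)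
qed

lemma StdRep_add:
  assumes "v \<in> StdRep" "w \<in> StdRep"
  shows "(\<lambda>i. v i + w i) \<in> StdRep"
proof -
  have "v 0 + v 1 + v 2 = 0" "w 0 + w 1 + w 2 = 0" using assms by (simp_all add: StdRep_def)
  then have "(v 0 + w 0) + (v 1 + w 1) + (v 2 + w 2) = 0" by algebra
  then show ?thesis using assms by (simp add: StdRep_def)
qed

lemma StdRep_scale: "v \<in> StdRep \<Longrightarrow> (\<lambda>i. c * v i) \<in> StdRep"
  by (simp add: StdRep_def distrib_left[symmetric])

lemma inv_permutes_3_fixes: "\<sigma> permutes {..<3} \<Longrightarrow> 3 \<le> i \<Longrightarrow> inv \<sigma> i = (i::nat)"
  using permutes_3_fixes[OF permutes_inv] by blast

lemma StdRep_actV: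
  assumes \<sigma>: "\<sigma> permutes {..<3}" and v: "v \<in> StdRep"
  shows "actV \<sigma> v \<in> StdRep"
proof -
  have "(\<Sum>i<3. v (inv \<sigma> i)) = (\<Sum>i<3. v i)"
    using sum.permute[OF permutes_inv[OF \<sigma>], of v] by (simp add: comp_def)
  then show ?thesis
    using v inv_permutes_3_fixes[OF \<sigma>] by (simp add: StdRep_def actV_def sum_lessThan_3)
qed

lemma actV_perm_of3:
  assumes "perm_of3 p q r permutes {..<3}"
  shows "actV (perm_of3 p q r) v p = v 0" "actV (perm_of3 p q r) v q = v 1"
    "actV (perm_of3 p q r) v r = v 2" "3 \<le> i \<Longrightarrow> actV (perm_of3 p q r) v i = v i"
  using inv_perm_of3[OF assms] inv_permutes_3_fixes[OF assms] by (simp_all add: actV_def)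

lemma nat_3_cases:
  fixes i :: nat
  obtains "i = 0" | "i = 1" | "i = 2" | "3 \<le> i"
  by linarith

lemma actV_sv:
  "actV rot3 sv01 = sv12" "actV rot3 sv12 = sv20" "actV swap01 sv01 = (\<lambda>i. (-1) * sv01 i)"
proof -
  have r: "perm_of3 1 2 0 permutes {..<3}" and s: "perm_of3 1 0 2 permutes {..<3}"
    using rot3_permutes swap01_permutes by (simp_all add: rot3_eq_perm_of3 swap01_eq_perm_of3)
  show "actV rot3 sv01 = sv12"
  proof
    fix i
    show "actV rot3 sv01 i = sv12 i"
      using actV_perm_of3[OF r, where v = sv01]
      by (cases rule: nat_3_cases[of i]) (simp_all add: rot3_eq_perm_of3 sv01_def sv12_def)
  qed
  show "actV rot3 sv12 = sv20"
  proof
    fix i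
    show "actV rot3 sv12 i = sv20 i"
      using actV_perm_of3[OF r, where v = sv12]
      by (cases rule: nat_3_cases[of i]) (simp_all add: rot3_eq_perm_of3 sv12_def sv20_def)
  qed
  show "actV swap01 sv01 = (\<lambda>i. (-1) * sv01 i)"
  proof
    fix i
    show "actV swap01 sv01 i = (-1) * sv01 i"
      using actV_perm_of3[OF s, where v = sv01]
      by (cases rule: nat_3_cases[of i]) (simp_all add: swap01_eq_perm_of3 sv01_def)
  qed
qed

lemma HomS3_D:
  assumes "\<phi> \<in> HomS3 W"
  shows "\<And>v. v \<in> StdRep \<Longrightarrow> \<phi> v \<in> W"
    "\<And>v. v \<notin> StdRep \<Longrightarrow> \<phi> v = (\<lambda>_. 0)"
    "\<And>v w. v \<in> StdRep \<Longrightarrow> w \<in> StdRep \<Longrightarrow> \<phi> (\<lambda>i. v i + w i) = (\<lambda>e. \<phi> v e + \<phi> w e)"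
    "\<And>c v. v \<in> StdRep \<Longrightarrow> \<phi> (\<lambda>i. c * v i) = (\<lambda>e. c * \<phi> v e)"
    "\<And>\<sigma> v. \<sigma> permutes {..<3} \<Longrightarrow> v \<in> StdRep \<Longrightarrow> \<phi> (actV \<sigma> v) = actA \<sigma> (\<phi> v)"
  using assms unfolding HomS3_def by blast+

text \<open>\<open>v = v\<^sub>0 (e\<^sub>0 - e\<^sub>1) - v\<^sub>2 (e\<^sub>1 - e\<^sub>2)\<close> on \<open>StdRep\<close>, and \<open>e\<^sub>1 - e\<^sub>2\<close> is the rotation of \<open>e\<^sub>0 - e\<^sub>1\<close>.\<close>
lemma HomS3_apply:
  assumes \<phi>: "\<phi> \<in> HomS3 W" and v: "v \<in> StdRep"
  shows "\<phi> v = (\<lambda>e. v 0 * \<phi> sv01 e - v 2 * actA rot3 (\<phi> sv01) e)"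
proof -
  note H = HomS3_D[OF \<phi>]
  have "v = (\<lambda>i. (\<lambda>i. v 0 * sv01 i) i + (\<lambda>i. (- v 2) * sv12 i) i)"
    using StdRep_apply_1[OF v] v
    by (auto simp: fun_eq_iff sv01_def sv12_def StdRep_def algebra_simps)
  then have "\<phi> v = (\<lambda>e. \<phi> (\<lambda>i. v 0 * sv01 i) e + \<phi> (\<lambda>i. (- v 2) * sv12 i) e)"
    using H(3) StdRep_scale sv_in_StdRep by metis
  also have "\<dots> = (\<lambda>e. v 0 * \<phi> sv01 e + (- v 2) * \<phi> sv12 e)"
    by (simp only: H(4)[OF sv_in_StdRep(1)] H(4)[OF sv_in_StdRep(2)])
  also have "\<phi> sv12 = actA rot3 (\<phi> sv01)"
    using H(5)[OF rot3_permutes] sv_in_StdRep actV_sv by metis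
  finally show ?thesis by simp
qed

lemma subspace_HomS3:
  assumes W: "vF.subspace W"
  shows "vH.subspace (HomS3 W :: ((nat \<Rightarrow> 'k::field) \<Rightarrow> (nat \<Rightarrow> nat) \<Rightarrow> 'k) set)"
  unfolding vH.subspace_def
proof (intro conjI ballI allI)
  show "0 \<in> HomS3 W"
    using vF.subspace_0[OF W] by (simp add: HomS3_def zero_fun_def actA_def)
next
  fix \<phi> \<psi> :: "(nat \<Rightarrow> 'k) \<Rightarrow> (nat \<Rightarrow> nat) \<Rightarrow> 'k" assume "\<phi> \<in> HomS3 W" "\<psi> \<in> HomS3 W"
  then show "\<phi> + \<psi> \<in> HomS3 W"
    using vF.subspace_add[OF W] by (simp add: HomS3_def actA_add fun_eq_iff algebra_simps)
next
  fix c and \<phi> :: "(nat \<Rightarrow> 'k) \<Rightarrow> (nat \<Rightarrow> nat) \<Rightarrow> 'k" assume "\<phi> \<in> HomS3 W"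
  then show "hscale c \<phi> \<in> HomS3 W"
    using vF.subspace_scale[OF W]
    by (simp add: HomS3_def hscale_def fscale_def actA_def fun_eq_iff algebra_simps)
qed

lemma HomS3_sv01_in_std_part:
  assumes \<phi>: "\<phi> \<in> HomS3 W"
  shows "\<phi> sv01 \<in> std_part W"
proof -
  note H = HomS3_D[OF \<phi>] and sv = sv_in_StdRep
  have "actA swap01 (\<phi> sv01) = - \<phi> sv01"
    using H(5)[OF swap01_permutes sv(1)] H(4)[OF sv(1), of "-1"] by (simp add: actV_sv fun_eq_iff)
  moreover have "actA rot3 (\<phi> sv01) = \<phi> sv12" "actA rot3 (\<phi> sv12) = \<phi> sv20"
    using H(5)[OF rot3_permutes sv(1)] H(5)[OF rot3_permutes sv(2)] by (simp_all add: actV_sv)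
  moreover have "\<phi> sv01 + \<phi> sv12 + \<phi> sv20 = 0"
  proof
    fix e
    have sum: "(\<lambda>i. sv01 i + sv12 i + sv20 i) = (\<lambda>i. 0 * sv01 i)"
      by (auto simp: sv01_def sv12_def sv20_def fun_eq_iff)
    have "\<phi> sv01 e + \<phi> sv12 e + \<phi> sv20 e = \<phi> (\<lambda>i. sv01 i + sv12 i + sv20 i) e"
      using H(3)[OF StdRep_add[OF sv(1,2)] sv(3)] H(3)[OF sv(1,2)] by simp
    also have "\<dots> = 0"
      unfolding sum H(4)[OF sv(1)] by simp
    finally show "(\<phi> sv01 + \<phi> sv12 + \<phi> sv20) e = 0 e" by simp
  qed
  ultimately show ?thesis using H(1)[OF sv(1)] by (simp add: std_part_def)
qed

lemma std_part_in_HomS3_sv01_image: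
  fixes W :: "((nat \<Rightarrow> nat) \<Rightarrow> 'k::field) set"
  assumes W: "vF.subspace W" "\<And>f. f \<in> W \<Longrightarrow> actA rot3 f \<in> W" and w: "w \<in> std_part W"
  shows "\<exists>\<phi>\<in>HomS3 W. \<phi> sv01 = w"
proof -
  have wW: "w \<in> W" and swap: "actA swap01 w = - w" and cycle: "w + actA rot3 w + actA rot3 (actA rot3 w) = 0"
    using w by (auto simp: std_part_def)
  have R1: "w (e \<circ> swap01) = - w e" for e using fun_cong[OF swap, of e] by (simp add: actA_def)
  have R2: "w e + w (e \<circ> rot3) + w (e \<circ> rot3 \<circ> rot3) = 0" for e
    using fun_cong[OF cycle, of e] by (simp add: actA_def)
  define \<phi> where "\<phi> v = (if v \<in> StdRep then (\<lambda>e. v 0 * w e - v 2 * actA rot3 w e) else (\<lambda>_. 0))" for v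
  have \<phi>_fscale: "\<phi> v = fscale (v 0) w - fscale (v 2) (actA rot3 w)" if "v \<in> StdRep" for v
    using that by (simp add: \<phi>_def fscale_def fun_eq_iff)
  have "\<phi> \<in> HomS3 W"
    unfolding HomS3_def mem_Collect_eq
  proof (intro conjI ballI allI impI)
    fix v :: "nat \<Rightarrow> 'k" assume "v \<in> StdRep"
    then show "\<phi> v \<in> W"
      using \<phi>_fscale vF.subspace_diff[OF W(1)] vF.subspace_scale[OF W(1)] W(2) wW by simp
  next
    fix v :: "nat \<Rightarrow> 'k" assume "v \<notin> StdRep"
    then show "\<phi> v = (\<lambda>_. 0)" by (simp add: \<phi>_def)
  next
    fix v u :: "nat \<Rightarrow> 'k" assume "v \<in> StdRep" "u \<in> StdRep"
    then show "\<phi> (\<lambda>i. v i + u i) = (\<lambda>e. \<phi> v e + \<phi> u e)"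
      using StdRep_add[of v u] by (simp add: \<phi>_def fun_eq_iff algebra_simps)
  next
    fix c and v :: "nat \<Rightarrow> 'k" assume "v \<in> StdRep"
    then show "\<phi> (\<lambda>i. c * v i) = (\<lambda>e. c * \<phi> v e)"
      using StdRep_scale[of v c] by (simp add: \<phi>_def fun_eq_iff algebra_simps)
  next
    fix \<sigma> :: "nat \<Rightarrow> nat" and v :: "nat \<Rightarrow> 'k" assume \<sigma>: "\<sigma> permutes {..<3}" and v: "v \<in> StdRep"
    show "\<phi> (actV \<sigma> v) = actA \<sigma> (\<phi> v)"
    proof
      fix e
      have "\<phi> (actV \<sigma> v) e = v (inv \<sigma> 0) * w e - v (inv \<sigma> 2) * w (e \<circ> rot3)"
        using StdRep_actV[OF \<sigma> v] by (simp add: \<phi>_def actV_def actA_def)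
      also have "\<dots> = v 0 * w (e \<circ> \<sigma>) - v 2 * w (e \<circ> \<sigma> \<circ> rot3)"
        by (rule std_part_equivariance[OF R1 R2 \<sigma> v])
      also have "\<dots> = actA \<sigma> (\<phi> v) e" using v by (simp add: \<phi>_def actA_def)
      finally show "\<phi> (actV \<sigma> v) e = actA \<sigma> (\<phi> v) e" .
    qed
  qed
  moreover have "\<phi> sv01 = w"
    using sv_in_StdRep(1)[where 'a = 'k] by (simp add: \<phi>_def) (simp add: sv01_def)
  ultimately show ?thesis by blast
qed

lemma dim_HomS3_eq_dim_std_part:
  assumes W: "vF.subspace W" "\<And>f. f \<in> W \<Longrightarrow> actA rot3 f \<in> W"
  shows "vH.dim (HomS3 W) = vF.dim (std_part (W :: ((nat \<Rightarrow> nat) \<Rightarrow> 'k::field) set))"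
proof -
  have lin: "Vector_Spaces.linear hscale fscale (\<lambda>\<phi>. \<phi> sv01 :: (nat \<Rightarrow> nat) \<Rightarrow> 'k)"
    by (simp add: Vector_Spaces.linear_iff vH.vector_space_axioms vF.vector_space_axioms
        hscale_def fscale_def)
  have span: "vH.span (HomS3 W) = HomS3 W"
    using subspace_HomS3[OF W(1)] by (rule vH.span_eq_iff[THEN iffD2])
  have "inj_on (\<lambda>\<phi>. \<phi> sv01) (vH.span (HomS3 W))"
    unfolding span
  proof (rule inj_onI)
    fix \<phi> \<psi> assume \<phi>: "\<phi> \<in> HomS3 W" and \<psi>: "\<psi> \<in> HomS3 W" and eq: "\<phi> sv01 = \<psi> sv01"
    show "\<phi> = \<psi>"
    proof
      fix v
      show "\<phi> v = \<psi> v"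
        using HomS3_apply[OF \<phi>, of v] HomS3_apply[OF \<psi>, of v] HomS3_D(2)[OF \<phi>, of v]
          HomS3_D(2)[OF \<psi>, of v] eq by (cases "v \<in> StdRep") simp_all
    qed
  qed
  then have "vF.dim ((\<lambda>\<phi>. \<phi> sv01) ` HomS3 W) = vH.dim (HomS3 W)"
    by (rule vHF.dim_image_eq_of_inj_on_span[OF lin])
  moreover have "(\<lambda>\<phi>. \<phi> sv01) ` HomS3 W = std_part W"
  proof
    show "(\<lambda>\<phi>. \<phi> sv01) ` HomS3 W \<subseteq> std_part W"
      using HomS3_sv01_in_std_part by (rule image_subsetI)
    show "std_part W \<subseteq> (\<lambda>\<phi>. \<phi> sv01) ` HomS3 W"
      using std_part_in_HomS3_sv01_image[OF W] by (auto simp: image_iff)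
  qed
  ultimately show ?thesis by simp
qed

section \<open>Counting representatives\<close>

fun weakly_decr :: "nat \<times> nat \<times> nat \<Rightarrow> bool" where
  "weakly_decr (a, b, c) \<longleftrightarrow> c \<le> b \<and> b \<le> a"

fun strictly_decr :: "nat \<times> nat \<times> nat \<Rightarrow> bool" where
  "strictly_decr (a, b, c) \<longleftrightarrow> c < b \<and> b < a"

lemma p3_eq_card: "1 \<le> d \<Longrightarrow> p3 (d - 1) n = card {t \<in> triples d n. weakly_decr t}"
  unfolding p3_def triples_def by (rule arg_cong[where f = card]) auto

lemma p3plus_eq_card: "1 \<le> d \<Longrightarrow> p3plus (d - 1) n = card {t \<in> triples d n. strictly_decr t}"
  unfolding p3plus_def triples_def by (rule arg_cong[where f = card]) auto

fun swap_triple :: "nat \<times> nat \<times> nat \<Rightarrow> nat \<times> nat \<times> nat" where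
  "swap_triple (a, b, c) = (b, a, c)"

fun rot_triple :: "nat \<times> nat \<times> nat \<Rightarrow> nat \<times> nat \<times> nat" where
  "rot_triple (a, b, c) = (b, c, a)"

lemma bij_betw_swap_triple: "bij_betw swap_triple (triples d n) (triples d n)"
  by (rule bij_betw_byWitness[where f' = swap_triple]) (auto simp: triples_def add_ac)

lemma bij_betw_rot_triple: "bij_betw rot_triple (triples d n) (triples d n)"
  by (rule bij_betw_byWitness[where f' = "\<lambda>(a, b, c). (c, a, b)"]) (auto simp: triples_def add_ac)

text \<open>Summed over the six rearrangements of any triple, \<open>2 [std_rep] + [weakly_decr] + [strictly_decr]\<close>
  gives \<open>6\<close>; averaging over \<open>S\<^sub>3\<close> therefore counts every triple once.\<close>
lemma card_triples_eq:
  "card (triples d n) = 2 * card (std_reps d n)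
     + card {t \<in> triples d n. weakly_decr t} + card {t \<in> triples d n. strictly_decr t}"
proof -
  define g :: "nat \<times> nat \<times> nat \<Rightarrow> nat"
    where "g t = 2 * of_bool (std_rep t) + of_bool (weakly_decr t) + of_bool (strictly_decr t)" for t
  have orbit: "g t + g (rot_triple t) + g (rot_triple (rot_triple t)) + g (swap_triple t)
      + g (swap_triple (rot_triple t)) + g (swap_triple (rot_triple (rot_triple t))) = 6" for t
  proof -
    obtain a b c where t: "t = (a, b, c)" by (cases t)
    show ?thesis unfolding t by (cases rule: order3_cases[of a b c]) (auto simp: g_def)
  qed
  have card_filter: "card {t \<in> triples d n. P t} = (\<Sum>t\<in>triples d n. of_bool (P t))" for P
    by (simp add: finite_triples Int_def)
  have "6 * card (triples d n) = (\<Sum>t\<in>triples d n. g t + g (rot_triple t) + g (rot_triple (rot_triple t))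
      + g (swap_triple t) + g (swap_triple (rot_triple t)) + g (swap_triple (rot_triple (rot_triple t))))"
    by (simp add: orbit)
  also have "\<dots> = 6 * (\<Sum>t\<in>triples d n. g t)"
    using sum.reindex_bij_betw[OF bij_betw_rot_triple, of "\<lambda>t. g (swap_triple t)"]
      sum.reindex_bij_betw[OF bij_betw_rot_triple, of "\<lambda>t. g (swap_triple (rot_triple t))"]
      sum.reindex_bij_betw[OF bij_betw_rot_triple, of g] sum.reindex_bij_betw[OF bij_betw_rot_triple, of "\<lambda>t. g (rot_triple t)"]
      sum.reindex_bij_betw[OF bij_betw_swap_triple, of g]
    by (simp add: sum.distrib)
  finally show ?thesis
    by (simp add: g_def sum.distrib card_filter std_reps_def sum_distrib_left[symmetric])
qed

definition pairs_count :: "nat \<Rightarrow> int \<Rightarrow> nat" where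
  "pairs_count d s = card {(b, c). b < d \<and> c < d \<and> int (b + c) = s}"

lemma card_triples_eq_sum: "card (triples d n) = (\<Sum>a<d. pairs_count d (n - int a))"
proof -
  have "triples d n = Sigma {..<d} (\<lambda>a. {(b, c). b < d \<and> c < d \<and> int (b + c) = n - int a})"
    by (auto simp: triples_def)
  moreover have "finite {(b, c). b < d \<and> c < d \<and> int (b + c) = s}" for s
    by (rule finite_subset[of _ "{..<d} \<times> {..<d}"]) auto
  ultimately show ?thesis by (simp add: card_SigmaI pairs_count_def)
qed

lemma pairs_count_eq: "int (pairs_count d s) = max 0 (min (int d - 1) s - max 0 (s - int d + 1) + 1)"
proof -
  have "bij_betw (\<lambda>(b, c). int b) {(b, c). b < d \<and> c < d \<and> int (b + c) = s}
      {max 0 (s - int d + 1) .. min (int d - 1) s}"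
    by (rule bij_betw_byWitness[where f' = "\<lambda>b. (nat b, nat (s - b))"]) auto
  then show ?thesis unfolding pairs_count_def by (simp add: bij_betw_same_card)
qed

lemma card_triples_diff:
  "int (card (triples d n)) - int (card (triples d (n - 1))) = int (pairs_count d n) - int (pairs_count d (n - int d))"
proof -
  define f where "f k = - int (pairs_count d (n - int k))" for k :: nat
  have "int (card (triples d n)) - int (card (triples d (n - 1)))
      = (\<Sum>a<d. int (pairs_count d (n - int a)) - int (pairs_count d (n - 1 - int a)))"
    by (simp add: card_triples_eq_sum sum_subtractf)
  also have "\<dots> = (\<Sum>a<d. f (Suc a) - f a)"
    by (rule sum.cong) (simp_all add: f_def algebra_simps)
  also have "\<dots> = f d - f 0" by (rule sum_lessThan_telescope)
  finally show ?thesis by (simp add: f_def)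
qed

lemma mult_eq_card_triples_diff:
  assumes "1 \<le> d" "2 * j \<le> 3 * (d - 1)"
  shows "mult d j = int (card (triples d (int j))) - int (card (triples d (int j - 1)))"
  using assms unfolding card_triples_diff mult_def pairs_count_eq by auto

lemma subspace_KerE: "vF.subspace (KerE d j :: ((nat \<Rightarrow> nat) \<Rightarrow> 'k::field) set)"
proof -
  have "vF.subspace (Agr d j \<inter> {f. Emap d f = (0 :: (nat \<Rightarrow> nat) \<Rightarrow> 'k)})"
    by (rule vF.subspace_inter[OF subspace_Agr Emap.subspace_kernel])
  moreover have "KerE d j = Agr d j \<inter> {f. Emap d f = (0 :: (nat \<Rightarrow> nat) \<Rightarrow> 'k)}"
    by (auto simp: KerE_def zero_fun_def)
  ultimately show ?thesis by simp
qed

lemma KerE_actA: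
  assumes \<sigma>: "\<sigma> permutes {..<3}" and f: "f \<in> KerE d j"
  shows "actA \<sigma> f \<in> KerE d j"
proof -
  have "actA \<sigma> f \<in> Agr d j" using f by (intro Agr_actA[OF \<sigma>]) (simp add: KerE_def)
  moreover have "Emap d (actA \<sigma> f) = actA \<sigma> (Emap d f)" by (rule Emap_actA[OF \<sigma>])
  ultimately show ?thesis using f by (simp add: KerE_def actA_def)
qed

lemma std_part_KerE: "std_part (KerE d j) = {f \<in> std_part (Agr d j). Emap d f = 0}"
  by (auto simp: std_part_def KerE_def zero_fun_def)

lemma st_eq_dim_kernel:
  "st (K :: 'k::field_char_0 itself) d j
     = vF.dim {f \<in> (std_part (Agr d j) :: ((nat \<Rightarrow> nat) \<Rightarrow> 'k) set). Emap d f = 0}"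
proof -
  have "(\<lambda>(c::'k) \<phi>. \<lambda>v e. c * \<phi> v e) = hscale" by (simp add: hscale_def fun_eq_iff)
  then have "st K d j = vH.dim (HomS3 (KerE d j :: ((nat \<Rightarrow> nat) \<Rightarrow> 'k) set))"
    by (simp add: st_def)
  also have "\<dots> = vF.dim (std_part (KerE d j :: ((nat \<Rightarrow> nat) \<Rightarrow> 'k) set))"
    by (rule dim_HomS3_eq_dim_std_part[OF subspace_KerE KerE_actA[OF rot3_permutes]])
  finally show ?thesis by (simp add: std_part_KerE)
qed

theorem theorem3p3:
  fixes K :: "'k::field_char_0 itself" and d j :: nat
  assumes "alg_closed K"
    and "d \<ge> 3"
    and "j \<le> (3 * (d - 1)) div 2"
  shows "real (st K d j) = real_of_int (mult d j - triv d j - sgn_mult d j) / 2"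
proof -
  have d: "1 \<le> d" and j: "2 * j \<le> 3 * (d - 1)" using assms(2,3) by linarith+
  have st: "int (st K d j) = int (card (std_reps d (int j))) - int (card (std_reps d (int j - 1)))"
    using st_eq_dim_kernel[of K d j] dim_kernel_Emap_std_part[OF j] by simp
  have "2 * int (st K d j) = mult d j - triv d j - sgn_mult d j"
    unfolding mult_eq_card_triples_diff[OF d j] triv_def sgn_mult_def p3_eq_card[OF d] p3plus_eq_card[OF d]
    using st card_triples_eq[of d "int j"] card_triples_eq[of d "int j - 1"] by simp
  then show ?thesis by simp
qed

end
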